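(* Let $A,A^*$ be a Leonard pair in $\mathcal A$. Then there exists a unique antiautomorphism $\dagger$ of $\mathcal A$ such that $A^\dagger=A$ and $A^{*\dagger}=A^*$. Moreover $X^{\dagger\dagger}=X$ for all $X\in\mathcal A$.
   Context: Let $\mathbb K$ be a field, $d\ge 0$ an integer, and $\mathcal A$ a $\mathbb K$-algebra isomorphic to $\mathrm{Mat}_{d+1}(\mathbb K)$; let $V$ be an irreducible left $\mathcal A$-module. A square matrix is tridiagonal if every nonzero entry lies on the diagonal, subdiagonal or superdiagonal; a tridiagonal matrix is irreducible if all subdiagonal and superdiagonal entries are nonzero. A Leonard pair in $\mathcal A$ is an ordered pair $A,A^*\in\mathcal A$ ($A^*$ is just a name, not an adjoint) such that (i) there is a basis of $V$ w.r.t. which the matrix of $A$ is irreducible tridiagonal and the matrix of $A^*$ is diagonal, and (ii) there is a basis of $V$ w.r.t. which the matrix of $A^*$ is irreducible tridiagonal and the matrix of $A$ is diagonal. An antiautomorphism of $\mathcal A$ is a $\mathbb K$-linear bijection $\sigma:\mathcal A\to\mathcal A$ with $(XY)^\sigma=Y^\sigma X^\sigma$ for all $X,Y\in\mathcal A$. *)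

theory Defs
  imports "Jordan_Normal_Form.Matrix"
begin

text \<open>We take the algebra to be Mat_n(K) with n = d+1 itself (every algebra isomorphic
  to it is handled by transport), and V = K^n its irreducible module (column vectors).
  A basis of V is encoded by an invertible matrix P whose columns are the basis vectors;
  the matrix of X w.r.t. that basis is P^{-1} X P.\<close>

definition tridiagonal :: "'a::zero mat \<Rightarrow> bool" where
  "tridiagonal M \<longleftrightarrow>
     (\<forall>i<dim_row M. \<forall>j<dim_col M. M $$ (i,j) \<noteq> 0 \<longrightarrow> i \<le> j + 1 \<and> j \<le> i + 1)"

definition irreducible_tridiagonal :: "'a::zero mat \<Rightarrow> bool" where
  "irreducible_tridiagonal M \<longleftrightarrow> dim_row M = dim_col M \<and> tridiagonal M \<and>
     (\<forall>i. i + 1 < dim_row M \<longrightarrow> M $$ (i+1,i) \<noteq> 0 \<and> M $$ (i,i+1) \<noteq> 0)"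

definition leonard_pair :: "nat \<Rightarrow> 'a::field mat \<Rightarrow> 'a mat \<Rightarrow> bool" where
  "leonard_pair n A As \<longleftrightarrow> A \<in> carrier_mat n n \<and> As \<in> carrier_mat n n \<and>
     (\<exists>P Pi. P \<in> carrier_mat n n \<and> Pi \<in> carrier_mat n n \<and> Pi * P = 1\<^sub>m n \<and> P * Pi = 1\<^sub>m n \<and>
        irreducible_tridiagonal (Pi * A * P) \<and> diagonal_mat (Pi * As * P)) \<and>
     (\<exists>P Pi. P \<in> carrier_mat n n \<and> Pi \<in> carrier_mat n n \<and> Pi * P = 1\<^sub>m n \<and> P * Pi = 1\<^sub>m n \<and>
        irreducible_tridiagonal (Pi * As * P) \<and> diagonal_mat (Pi * A * P))"

definition antiautomorphism :: "nat \<Rightarrow> ('a::field mat \<Rightarrow> 'a mat) \<Rightarrow> bool" where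
  "antiautomorphism n \<sigma> \<longleftrightarrow> bij_betw \<sigma> (carrier_mat n n) (carrier_mat n n) \<and>
     (\<forall>X\<in>carrier_mat n n. \<forall>Y\<in>carrier_mat n n. \<sigma> (X + Y) = \<sigma> X + \<sigma> Y) \<and>
     (\<forall>c. \<forall>X\<in>carrier_mat n n. \<sigma> (c \<cdot>\<^sub>m X) = c \<cdot>\<^sub>m \<sigma> X) \<and>
     (\<forall>X\<in>carrier_mat n n. \<forall>Y\<in>carrier_mat n n. \<sigma> (X * Y) = \<sigma> Y * \<sigma> X)"

end

theory Submission
  imports Defs
begin

text \<open>Choose a basis in which \<open>A\<close> is an irreducible tridiagonal matrix \<open>T\<close> and \<open>A\<^sup>*\<close> a
  diagonal matrix \<open>D\<close>. The diagonal entries of \<open>D\<close> are distinct, because \<open>A\<^sup>*\<close> is also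
  similar to an irreducible tridiagonal matrix, whose eigenspaces are lines. Hence the algebra
  generated by \<open>T\<close> and \<open>D\<close> contains the idempotents \<open>E\<^sub>i\<^sub>i\<close> (Lagrange interpolation in \<open>D\<close>),
  then \<open>E\<^sub>i\<^sub>j\<close> for adjacent \<open>i, j\<close> (as multiples of \<open>E\<^sub>i\<^sub>i T E\<^sub>j\<^sub>j\<close>) and so every matrix; thus an
  antiautomorphism is determined by its values on \<open>A\<close> and \<open>A\<^sup>*\<close>. For existence, irreducibility
  gives an invertible diagonal \<open>K\<close> with \<open>K T\<^sup>t = T K\<close>, and with the symmetric matrix
  \<open>M = P K P\<^sup>t\<close> (\<open>P\<close> the change of basis) the map \<open>X \<mapsto> M X\<^sup>t M\<^sup>-\<^sup>1\<close> is an involutive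
  antiautomorphism fixing \<open>A\<close> and \<open>A\<^sup>*\<close>.\<close>

text \<open>The library lemmas on products carry carrier premises whose dimensions do not occur in
  the left-hand side, so the simplifier cannot discharge them; the square versions below can,
  once instantiated with \<open>[where n=n]\<close>.\<close>

lemma square_mat_assoc:
  "A \<in> carrier_mat n n \<Longrightarrow> B \<in> carrier_mat n n \<Longrightarrow> C \<in> carrier_mat n n \<Longrightarrow>
   A * B * C = A * (B * (C :: 'a::semiring_0 mat))"
  by (rule assoc_mult_mat)

lemma square_mat_mult_carrier:
  "A \<in> carrier_mat n n \<Longrightarrow> B \<in> carrier_mat n n \<Longrightarrow> A * (B :: 'a::semiring_0 mat) \<in> carrier_mat n n"
  by (rule mult_carrier_mat)

lemma square_mat_inverse_cancel:
  fixes A B X :: "'a::semiring_1 mat"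
  assumes "A * B = 1\<^sub>m n" "A \<in> carrier_mat n n" "B \<in> carrier_mat n n" "X \<in> carrier_mat n n"
  shows "A * (B * X) = X"
  using assms by (metis assoc_mult_mat left_mult_one_mat)

lemma square_mat_mult_one:
  "A \<in> carrier_mat n n \<Longrightarrow> A * 1\<^sub>m n = (A :: 'a::semiring_1 mat)"
  "A \<in> carrier_mat n n \<Longrightarrow> 1\<^sub>m n * A = A"
  by simp_all

lemma square_mat_transpose_mult:
  "A \<in> carrier_mat n n \<Longrightarrow> B \<in> carrier_mat n n \<Longrightarrow>
   transpose_mat (A * B) = transpose_mat B * transpose_mat (A :: 'a::comm_semiring_0 mat)"
  by (rule transpose_mult)

lemma square_mat_distrib:
  fixes A B C :: "'a::semiring_0 mat"
  shows "A \<in> carrier_mat n n \<Longrightarrow> B \<in> carrier_mat n n \<Longrightarrow> C \<in> carrier_mat n n \<Longrightarrow>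
    (A + B) * C = A * C + B * C"
  and "A \<in> carrier_mat n n \<Longrightarrow> B \<in> carrier_mat n n \<Longrightarrow> C \<in> carrier_mat n n \<Longrightarrow>
    A * (B + C) = A * B + A * C"
  by (simp_all add: add_mult_distrib_mat mult_add_distrib_mat)

lemma square_mat_smult:
  fixes A B :: "'a::comm_semiring_0 mat"
  shows "A \<in> carrier_mat n n \<Longrightarrow> B \<in> carrier_mat n n \<Longrightarrow> (c \<cdot>\<^sub>m A) * B = c \<cdot>\<^sub>m (A * B)"
  and "A \<in> carrier_mat n n \<Longrightarrow> B \<in> carrier_mat n n \<Longrightarrow> A * (c \<cdot>\<^sub>m B) = c \<cdot>\<^sub>m (A * B)"
  by (simp_all add: mult_smult_assoc_mat mult_smult_distrib)

lemmas square_mat_simps = square_mat_assoc square_mat_mult_carrier square_mat_inverse_cancel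
  square_mat_mult_one square_mat_transpose_mult square_mat_distrib square_mat_smult

lemma transpose_smult_mat: "transpose_mat (c \<cdot>\<^sub>m A) = c \<cdot>\<^sub>m transpose_mat A"
  by (rule eq_matI) auto

lemma transpose_mat_diag: "transpose_mat (mat_diag n f) = mat_diag n f"
  by (rule eq_matI) (auto simp: mat_diag_def)

lemma mult_mat_vec_unit_vec:
  "(M :: 'a::semiring_1 mat) \<in> carrier_mat m n \<Longrightarrow> i < n \<Longrightarrow> M *\<^sub>v unit_vec n i = col M i"
  by (intro eq_vecI) auto

lemma left_invertible_mult_mat_vec_eq_zero:
  fixes M Mi :: "'a::semiring_1 mat"
  assumes "Mi \<in> carrier_mat n n" "M \<in> carrier_mat n n" "Mi * M = 1\<^sub>m n"
    and "v \<in> carrier_vec n" "M *\<^sub>v v = 0\<^sub>v n"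
  shows "v = 0\<^sub>v n"
proof -
  have "v = Mi *\<^sub>v (M *\<^sub>v v)" using assms(1-4) by (metis assoc_mult_mat_vec one_mult_mat_vec)
  also have "\<dots> = 0\<^sub>v n" using assms by (intro eq_vecI) auto
  finally show ?thesis .
qed

section \<open>Irreducible tridiagonal matrices\<close>

lemma irreducible_tridiagonal_super_nonzero:
  "irreducible_tridiagonal T \<Longrightarrow> Suc i < dim_row T \<Longrightarrow> T $$ (i, Suc i) \<noteq> 0"
  and irreducible_tridiagonal_sub_nonzero:
  "irreducible_tridiagonal T \<Longrightarrow> Suc i < dim_row T \<Longrightarrow> T $$ (Suc i, i) \<noteq> 0"
  unfolding irreducible_tridiagonal_def by simp_all

lemma tridiagonal_outside_band:
  "tridiagonal T \<Longrightarrow> i < dim_row T \<Longrightarrow> j < dim_col T \<Longrightarrow> Suc i < j \<or> Suc j < i \<Longrightarrow> T $$ (i,j) = 0"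
  unfolding tridiagonal_def by fastforce

lemma irreducible_tridiagonal_eigenvector_eq_zero:
  fixes T :: "'a::field mat"
  assumes T: "T \<in> carrier_mat n n" "irreducible_tridiagonal T"
    and v: "v \<in> carrier_vec n" "T *\<^sub>v v = c \<cdot>\<^sub>v v" "v $ 0 = 0"
  shows "v = 0\<^sub>v n"
proof -
  have "\<forall>k\<le>m. v $ k = 0" if "m < n" for m
    using that
  proof (induction m)
    case 0
    then show ?case using v by simp
  next
    case (Suc m)
    then have below: "\<forall>k\<le>m. v $ k = 0" by simp
    have terms: "T $$ (m,k) * v $ k = (if k = Suc m then T $$ (m, Suc m) * v $ Suc m else 0)"
      if "k \<in> {..<n}" for k
    proof (cases "k \<le> m \<or> k = Suc m")
      case False
      then show ?thesis
        using T Suc.prems that tridiagonal_outside_band[of T m k] by (simp add: irreducible_tridiagonal_def)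
    qed (use below in auto)
    have "(T *\<^sub>v v) $ m = (\<Sum>k<n. T $$ (m,k) * v $ k)"
      using T v(1) Suc.prems by (simp add: scalar_prod_def atLeast0LessThan)
    also have "\<dots> = (\<Sum>k<n. if k = Suc m then T $$ (m, Suc m) * v $ Suc m else 0)"
      by (rule sum.cong[OF refl], rule terms)
    also have "\<dots> = T $$ (m, Suc m) * v $ Suc m"
      using Suc.prems by simp
    finally have "(T *\<^sub>v v) $ m = T $$ (m, Suc m) * v $ Suc m" .
    then have "T $$ (m, Suc m) * v $ Suc m = 0"
      using v below Suc.prems by simp
    then have "v $ Suc m = 0"
      using T Suc.prems irreducible_tridiagonal_super_nonzero[of T m] by simp
    then show ?case using below le_Suc_eq by auto
  qed
  then show ?thesis using v by (intro eq_vecI) auto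
qed

text \<open>An irreducible tridiagonal matrix has one-dimensional eigenspaces, since an eigenvector
  is determined by its first entry.\<close>
lemma diagonal_entries_distinct_if_similar_irreducible_tridiagonal:
  fixes T D M Mi :: "'a::field mat"
  assumes T: "T \<in> carrier_mat n n" "irreducible_tridiagonal T"
    and D: "D \<in> carrier_mat n n" "diagonal_mat D"
    and M: "M \<in> carrier_mat n n" "Mi \<in> carrier_mat n n" "Mi * M = 1\<^sub>m n"
    and TM: "T * M = M * D"
    and ij: "i < n" "j < n" "i \<noteq> j"
  shows "D $$ (i,i) \<noteq> D $$ (j,j)"
proof
  assume same: "D $$ (i,i) = D $$ (j,j)"
  have "D = mat_diag n (\<lambda>k. D $$ (k,k))"
    using D by (intro eq_matI) (auto simp: mat_diag_def diagonal_mat_def)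
  then have "M * D = M * mat_diag n (\<lambda>k. D $$ (k,k))" by (rule arg_cong)
  also have "\<dots> = mat n n (\<lambda>(r,k). M $$ (r,k) * D $$ (k,k))" by (rule mat_diag_mult_right[OF M(1)])
  finally have MD: "M * D = mat n n (\<lambda>(r,k). M $$ (r,k) * D $$ (k,k))" .
  have eigen: "T *\<^sub>v col M k = D $$ (k,k) \<cdot>\<^sub>v col M k" if "k < n" for k
  proof -
    have "T *\<^sub>v col M k = col (M * D) k"
      unfolding TM[symmetric] by (rule col_mult2[OF T(1) M(1) that, symmetric])
    also have "\<dots> = D $$ (k,k) \<cdot>\<^sub>v col M k"
      using M that unfolding MD by (intro eq_vecI) (simp_all add: mult.commute)
    finally show ?thesis .
  qed
  define x where "x = col M i"
  define y where "y = col M j"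
  have xy: "x \<in> carrier_vec n" "y \<in> carrier_vec n" using M ij by (simp_all add: x_def y_def)
  \<comment> \<open>\<open>M w\<close> is an eigenvector with first entry \<open>0\<close>, hence zero.\<close>
  define w where "w = (y $ 0) \<cdot>\<^sub>v unit_vec n i - (x $ 0) \<cdot>\<^sub>v unit_vec n j"
  have w: "w \<in> carrier_vec n" by (simp add: w_def)
  have Mw: "M *\<^sub>v w = (y $ 0) \<cdot>\<^sub>v x - (x $ 0) \<cdot>\<^sub>v y"
    using M ij by (simp add: w_def x_def y_def mult_minus_distrib_mat_vec mult_mat_vec mult_mat_vec_unit_vec)
  have "T *\<^sub>v (M *\<^sub>v w) = (y $ 0) \<cdot>\<^sub>v (T *\<^sub>v x) - (x $ 0) \<cdot>\<^sub>v (T *\<^sub>v y)"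
    using T xy by (simp add: Mw mult_minus_distrib_mat_vec mult_mat_vec)
  also have "\<dots> = D $$ (i,i) \<cdot>\<^sub>v (M *\<^sub>v w)"
    using eigen ij same xy unfolding Mw x_def[symmetric] y_def[symmetric]
    by (intro eq_vecI) (auto simp: x_def y_def algebra_simps)
  finally have "M *\<^sub>v w = 0\<^sub>v n"
    using T M w xy ij by (intro irreducible_tridiagonal_eigenvector_eq_zero) (auto simp: Mw)
  then have "w = 0\<^sub>v n"
    using left_invertible_mult_mat_vec_eq_zero[OF M(2,1,3) w] by simp
  then have "w $ i = 0" "w $ j = 0" using ij by simp_all
  then have "x $ 0 = 0" using ij by (simp add: w_def)
  then have "x = 0\<^sub>v n"
    using T xy eigen ij by (intro irreducible_tridiagonal_eigenvector_eq_zero) (auto simp: x_def)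
  then have "unit_vec n i = (0\<^sub>v n :: 'a vec)"
    using left_invertible_mult_mat_vec_eq_zero[OF M(2,1,3), of "unit_vec n i"] M ij
    by (simp add: x_def mult_mat_vec_unit_vec)
  then show False using ij by simp
qed

primrec tridiagonal_symmetrizer :: "'a::field mat \<Rightarrow> nat \<Rightarrow> 'a" where
  "tridiagonal_symmetrizer T 0 = 1"
| "tridiagonal_symmetrizer T (Suc i) = tridiagonal_symmetrizer T i * T $$ (Suc i, i) / T $$ (i, Suc i)"

lemma tridiagonal_symmetrizer_nonzero:
  assumes "irreducible_tridiagonal T" "i < dim_row T"
  shows "tridiagonal_symmetrizer T i \<noteq> 0"
  using assms(2)
proof (induction i)
  case (Suc i)
  then show ?case
    using assms(1)
    by (simp add: irreducible_tridiagonal_super_nonzero irreducible_tridiagonal_sub_nonzero)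
qed simp

lemma tridiagonal_symmetrizer_symmetric:
  assumes T: "T \<in> carrier_mat n n" "irreducible_tridiagonal T" and ab: "a < n" "b < n"
  shows "tridiagonal_symmetrizer T a * T $$ (b,a) = T $$ (a,b) * tridiagonal_symmetrizer T b"
proof -
  consider "b = Suc a" | "a = Suc b" | "a = b" | "Suc a < b \<or> Suc b < a" by linarith
  then show ?thesis
  proof cases
    case 1
    then show ?thesis using T ab irreducible_tridiagonal_super_nonzero[of T a] by simp
  next
    case 2
    then show ?thesis using T ab irreducible_tridiagonal_super_nonzero[of T b] by simp
  next
    case 4
    then show ?thesis
      using T ab tridiagonal_outside_band[of T a b] tridiagonal_outside_band[of T b a]
      by (auto simp: irreducible_tridiagonal_def)
  qed simp
qed

lemma irreducible_tridiagonal_symmetrizable: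
  assumes T: "T \<in> carrier_mat n n" "irreducible_tridiagonal T"
  shows "mat_diag n (tridiagonal_symmetrizer T) * transpose_mat T = T * mat_diag n (tridiagonal_symmetrizer T)"
  using T tridiagonal_symmetrizer_symmetric[OF T]
  by (simp add: mat_diag_mult_left[of _ n n] mat_diag_mult_right[of _ n n]) (auto intro!: eq_matI)

section \<open>Matrix units and subalgebras\<close>

definition matrix_unit :: "nat \<Rightarrow> nat \<Rightarrow> nat \<Rightarrow> 'a::{zero,one} mat" where
  "matrix_unit n i j = mat n n (\<lambda>(a,b). if a = i \<and> b = j then 1 else 0)"

lemma matrix_unit_carrier [simp]: "matrix_unit n i j \<in> carrier_mat n n"
  by (simp add: matrix_unit_def)

lemma matrix_unit_eq_mat_diag: "matrix_unit n i i = mat_diag n (\<lambda>m. if m = i then 1 else 0)"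
  by (rule eq_matI) (auto simp: matrix_unit_def mat_diag_def)

lemma matrix_unit_mult_matrix_unit:
  assumes "j < n"
  shows "matrix_unit n i j * matrix_unit n j k = (matrix_unit n i k :: 'a::semiring_1 mat)"
  using assms
  by (intro eq_matI)
    (auto simp: matrix_unit_def scalar_prod_def if_distrib[of "\<lambda>x. x * _"] sum.delta cong: if_cong)

lemma mult_matrix_unit_sandwich:
  fixes X :: "'a::comm_ring_1 mat"
  assumes "X \<in> carrier_mat n n" "i < n" "j < n"
  shows "matrix_unit n i i * X * matrix_unit n j j = X $$ (i,j) \<cdot>\<^sub>m matrix_unit n i j"
  using assms
  by (simp add: matrix_unit_eq_mat_diag mat_diag_mult_left[of _ n n] mat_diag_mult_right[of _ n n])
     (auto simp: matrix_unit_def)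

definition subalgebra_mat :: "nat \<Rightarrow> 'a::field mat set \<Rightarrow> bool" where
  "subalgebra_mat n S \<longleftrightarrow> S \<subseteq> carrier_mat n n \<and> 1\<^sub>m n \<in> S \<and>
     (\<forall>X\<in>S. \<forall>Y\<in>S. X + Y \<in> S \<and> X * Y \<in> S) \<and> (\<forall>c. \<forall>X\<in>S. c \<cdot>\<^sub>m X \<in> S)"

context
  fixes n :: nat and S :: "'a::field mat set"
  assumes S: "subalgebra_mat n S"
begin

lemma subalgebra_mat_carrier: "X \<in> S \<Longrightarrow> X \<in> carrier_mat n n"
  and subalgebra_mat_one: "1\<^sub>m n \<in> S"
  and subalgebra_mat_add: "X \<in> S \<Longrightarrow> Y \<in> S \<Longrightarrow> X + Y \<in> S"
  and subalgebra_mat_mult: "X \<in> S \<Longrightarrow> Y \<in> S \<Longrightarrow> X * Y \<in> S"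
  and subalgebra_mat_smult: "X \<in> S \<Longrightarrow> c \<cdot>\<^sub>m X \<in> S"
  using S unfolding subalgebra_mat_def by blast+

lemma subalgebra_mat_diag_prod:
  assumes "mat_diag n d \<in> S" "finite C"
  shows "mat_diag n (\<lambda>m. \<Prod>c\<in>C. d m - c) \<in> S"
  using \<open>finite C\<close>
proof (induction C rule: finite_induct)
  case empty
  then show ?case using subalgebra_mat_one by simp
next
  case (insert c C)
  have "mat_diag n (\<lambda>m. d m - c) = mat_diag n d + (- c) \<cdot>\<^sub>m 1\<^sub>m n"
    by (rule eq_matI) (auto simp: mat_diag_def)
  then have "mat_diag n (\<lambda>m. d m - c) \<in> S"
    using assms(1) subalgebra_mat_one by (simp add: subalgebra_mat_add subalgebra_mat_smult)
  moreover have "mat_diag n (\<lambda>m. \<Prod>c'\<in>insert c C. d m - c') =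
      mat_diag n (\<lambda>m. d m - c) * mat_diag n (\<lambda>m. \<Prod>c'\<in>C. d m - c')"
    using insert by simp
  ultimately show ?case
    using insert.IH subalgebra_mat_mult by metis
qed

text \<open>\<open>E\<^sub>i\<^sub>i\<close> is the Lagrange interpolation polynomial of the \<open>i\<close>-th eigenvalue, evaluated at \<open>D\<close>.\<close>
lemma subalgebra_mat_diagonal_matrix_units:
  assumes D: "D \<in> S" "diagonal_mat D"
    and distinct: "\<And>i j. i < n \<Longrightarrow> j < n \<Longrightarrow> i \<noteq> j \<Longrightarrow> D $$ (i,i) \<noteq> D $$ (j,j)"
    and i: "i < n"
  shows "matrix_unit n i i \<in> S"
proof -
  define d where "d m = D $$ (m,m)" for m
  define C where "C = d ` ({..<n} - {i})"
  have "D = mat_diag n d"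
    using D subalgebra_mat_carrier[of D] by (intro eq_matI) (auto simp: mat_diag_def d_def diagonal_mat_def)
  then have prod: "mat_diag n (\<lambda>m. \<Prod>c\<in>C. d m - c) \<in> S"
    using D subalgebra_mat_diag_prod[of d C] by (simp add: C_def)
  have "d i \<notin> C" using distinct i by (auto simp: C_def d_def)
  then have nz: "(\<Prod>c\<in>C. d i - c) \<noteq> 0" by (simp add: C_def)
  have "(\<Prod>c\<in>C. d m - c) = 0" if "m < n" "m \<noteq> i" for m
    using that by (intro prod_zero) (auto simp: C_def)
  then have "matrix_unit n i i = inverse (\<Prod>c\<in>C. d i - c) \<cdot>\<^sub>m mat_diag n (\<lambda>m. \<Prod>c\<in>C. d m - c)"
    using nz by (intro eq_matI) (auto simp: matrix_unit_def mat_diag_def)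
  then show ?thesis using prod subalgebra_mat_smult by simp
qed

lemma subalgebra_mat_matrix_units:
  assumes T: "T \<in> S" "irreducible_tridiagonal T"
    and D: "D \<in> S" "diagonal_mat D"
    and distinct: "\<And>i j. i < n \<Longrightarrow> j < n \<Longrightarrow> i \<noteq> j \<Longrightarrow> D $$ (i,i) \<noteq> D $$ (j,j)"
    and ij: "i < n" "j < n"
  shows "matrix_unit n i j \<in> S"
proof -
  have Tc: "T \<in> carrier_mat n n" using T subalgebra_mat_carrier by blast
  have diag: "matrix_unit n k k \<in> S" if "k < n" for k
    using subalgebra_mat_diagonal_matrix_units[OF D distinct that] .
  have nonzero: "matrix_unit n k l \<in> S" if "k < n" "l < n" "T $$ (k,l) \<noteq> 0" for k l
  proof -
    have "matrix_unit n k l = inverse (T $$ (k,l)) \<cdot>\<^sub>m (T $$ (k,l) \<cdot>\<^sub>m matrix_unit n k l)"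
      using that by (intro eq_matI) auto
    also have "\<dots> = inverse (T $$ (k,l)) \<cdot>\<^sub>m (matrix_unit n k k * T * matrix_unit n l l)"
      using that Tc by (simp add: mult_matrix_unit_sandwich)
    finally show ?thesis using that diag T subalgebra_mat_mult subalgebra_mat_smult by metis
  qed
  have through_zero: "matrix_unit n 0 k \<in> S \<and> matrix_unit n k 0 \<in> S" if "k < n" for k
    using that
  proof (induction k)
    case 0
    then show ?case using diag by simp
  next
    case (Suc k)
    have "T $$ (k, Suc k) \<noteq> 0" "T $$ (Suc k, k) \<noteq> 0"
      using Suc.prems Tc T(2)
      by (simp_all add: irreducible_tridiagonal_super_nonzero irreducible_tridiagonal_sub_nonzero)
    then have "matrix_unit n k (Suc k) \<in> S" "matrix_unit n (Suc k) k \<in> S"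
      using Suc.prems nonzero by simp_all
    moreover have "matrix_unit n 0 (Suc k) = (matrix_unit n 0 k * matrix_unit n k (Suc k) :: 'a mat)"
      "matrix_unit n (Suc k) 0 = (matrix_unit n (Suc k) k * matrix_unit n k 0 :: 'a mat)"
      using Suc.prems by (simp_all add: matrix_unit_mult_matrix_unit)
    ultimately show ?case using Suc subalgebra_mat_mult by simp
  qed
  have "matrix_unit n i j = (matrix_unit n i 0 * matrix_unit n 0 j :: 'a mat)"
    using ij by (simp add: matrix_unit_mult_matrix_unit)
  then show ?thesis using through_zero ij subalgebra_mat_mult by simp
qed

lemma subalgebra_mat_eq_carrier_if_matrix_units:
  assumes units: "\<And>i j. i < n \<Longrightarrow> j < n \<Longrightarrow> matrix_unit n i j \<in> S"
  shows "S = carrier_mat n n"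
proof
  show "carrier_mat n n \<subseteq> S"
  proof
    fix X :: "'a mat"
    assume X: "X \<in> carrier_mat n n"
    define restrict where "restrict F = mat n n (\<lambda>p. if p \<in> F then X $$ p else 0)" for F
    have "restrict F \<in> S" if "finite F" for F
      using that
    proof (induction F rule: finite_induct)
      case empty
      have "restrict {} = 0 \<cdot>\<^sub>m 1\<^sub>m n" by (rule eq_matI) (auto simp: restrict_def)
      then show ?case using subalgebra_mat_one subalgebra_mat_smult by simp
    next
      case (insert p F)
      obtain i j where p: "p = (i,j)" by fastforce
      show ?case
      proof (cases "i < n \<and> j < n")
        case True
        have "restrict (insert p F) = restrict F + X $$ (i,j) \<cdot>\<^sub>m matrix_unit n i j"
          using insert.hyps(2) p by (intro eq_matI) (auto simp: restrict_def matrix_unit_def)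
        then show ?thesis using insert.IH units True subalgebra_mat_add subalgebra_mat_smult by simp
      next
        case False
        have "restrict (insert p F) = restrict F"
          using False p by (intro eq_matI) (auto simp: restrict_def)
        then show ?thesis using insert.IH by simp
      qed
    qed
    moreover have "restrict ({..<n} \<times> {..<n}) = X"
      using X by (intro eq_matI) (auto simp: restrict_def)
    ultimately show "X \<in> S" by (metis finite_SigmaI finite_lessThan)
  qed
qed (use subalgebra_mat_carrier in blast)

end

lemma subalgebra_mat_conj:
  fixes P Pi :: "'a::field mat"
  assumes S: "subalgebra_mat n S"
    and P: "P \<in> carrier_mat n n" "Pi \<in> carrier_mat n n" "P * Pi = 1\<^sub>m n" "Pi * P = 1\<^sub>m n"
  shows "subalgebra_mat n {Y \<in> carrier_mat n n. P * Y * Pi \<in> S}"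
proof -
  have "P * (X + Y) * Pi = P * X * Pi + P * Y * Pi"
    "P * (X * Y) * Pi = (P * X * Pi) * (P * Y * Pi)"
    "P * (c \<cdot>\<^sub>m X) * Pi = c \<cdot>\<^sub>m (P * X * Pi)"
    if "X \<in> carrier_mat n n" "Y \<in> carrier_mat n n" for X Y c
    using P that by (simp_all add: square_mat_simps[where n=n])
  moreover have "P * 1\<^sub>m n * Pi = 1\<^sub>m n" using P by simp
  ultimately show ?thesis
    using S unfolding subalgebra_mat_def by auto
qed

section \<open>Antiautomorphisms\<close>

lemma antiautomorphism_carrier:
  "antiautomorphism n \<sigma> \<Longrightarrow> X \<in> carrier_mat n n \<Longrightarrow> \<sigma> X \<in> carrier_mat n n"
  unfolding antiautomorphism_def bij_betw_def by blast

lemma antiautomorphism_one: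
  assumes "antiautomorphism n \<sigma>"
  shows "\<sigma> (1\<^sub>m n) = 1\<^sub>m n"
proof -
  obtain Z where Z: "Z \<in> carrier_mat n n" "\<sigma> Z = 1\<^sub>m n"
    using assms one_carrier_mat unfolding antiautomorphism_def bij_betw_def by (metis imageE)
  have "\<sigma> (1\<^sub>m n) = \<sigma> (1\<^sub>m n) * \<sigma> Z"
    using Z antiautomorphism_carrier[OF assms one_carrier_mat] by simp
  also have "\<dots> = \<sigma> (Z * 1\<^sub>m n)"
    using assms Z(1) unfolding antiautomorphism_def by (metis one_carrier_mat)
  finally show ?thesis using Z by simp
qed

lemma antiautomorphism_equalizer_subalgebra:
  assumes "antiautomorphism n \<sigma>" "antiautomorphism n \<tau>"
  shows "subalgebra_mat n {X \<in> carrier_mat n n. \<sigma> X = \<tau> X}"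
  using assms antiautomorphism_one[OF assms(1)] antiautomorphism_one[OF assms(2)]
  unfolding subalgebra_mat_def antiautomorphism_def by auto

lemma transpose_conj_antiautomorphism:
  fixes M Mi :: "'a::field mat"
  assumes M: "M \<in> carrier_mat n n" "Mi \<in> carrier_mat n n" "M * Mi = 1\<^sub>m n" "Mi * M = 1\<^sub>m n"
  shows "antiautomorphism n (\<lambda>X. M * transpose_mat X * Mi)"
proof -
  let ?\<sigma> = "\<lambda>X. M * transpose_mat X * Mi"
  have "bij_betw ?\<sigma> (carrier_mat n n) (carrier_mat n n)"
  proof (rule bij_betw_byWitness[where f' = "\<lambda>X. transpose_mat (Mi * X * M)"])
    have "transpose_mat M * transpose_mat Mi = 1\<^sub>m n"
      using M square_mat_transpose_mult[of Mi n M] by simp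
    then show "\<forall>X\<in>carrier_mat n n. transpose_mat (Mi * ?\<sigma> X * M) = X"
      using M by (simp add: square_mat_simps[where n=n])
    show "\<forall>X\<in>carrier_mat n n. ?\<sigma> (transpose_mat (Mi * X * M)) = X"
      using M by (simp add: square_mat_simps[where n=n])
  qed (use M in auto)
  moreover have "transpose_mat Mi * transpose_mat M = 1\<^sub>m n"
    using M square_mat_transpose_mult[of M n Mi] by simp
  then have "?\<sigma> (X * Y) = ?\<sigma> Y * ?\<sigma> X" if "X \<in> carrier_mat n n" "Y \<in> carrier_mat n n" for X Y
    using M that by (simp add: square_mat_simps[where n=n])
  ultimately show ?thesis
    using M unfolding antiautomorphism_def
    by (simp add: square_mat_simps[where n=n] transpose_add transpose_smult_mat)
qed

lemma symmetric_inverse_symmetric: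
  fixes M Mi :: "'a::comm_semiring_1 mat"
  assumes M: "M \<in> carrier_mat n n" "Mi \<in> carrier_mat n n" "M * Mi = 1\<^sub>m n" "Mi * M = 1\<^sub>m n"
    and sym: "transpose_mat M = M"
  shows "transpose_mat Mi = Mi"
proof -
  have "transpose_mat Mi * M = 1\<^sub>m n"
    using M sym square_mat_transpose_mult[of M n Mi] by simp
  have "transpose_mat Mi = transpose_mat Mi * (M * Mi)"
    using M by simp
  also have "\<dots> = transpose_mat Mi * M * Mi"
    by (rule assoc_mult_mat[symmetric]) (use M in auto)
  also have "\<dots> = Mi" using \<open>transpose_mat Mi * M = 1\<^sub>m n\<close> M by simp
  finally show ?thesis .
qed

lemma transpose_conj_involution:
  fixes M Mi :: "'a::field mat"
  assumes M: "M \<in> carrier_mat n n" "Mi \<in> carrier_mat n n" "M * Mi = 1\<^sub>m n" "Mi * M = 1\<^sub>m n"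
    and sym: "transpose_mat M = M"
    and X: "X \<in> carrier_mat n n"
  shows "M * transpose_mat (M * transpose_mat X * Mi) * Mi = X"
  using M X sym symmetric_inverse_symmetric[OF M sym] by (simp add: square_mat_simps[where n=n])

lemma transpose_conj_change_basis:
  fixes P Pi K Ki Y :: "'a::comm_ring_1 mat"
  assumes P: "P \<in> carrier_mat n n" "Pi \<in> carrier_mat n n" "Pi * P = 1\<^sub>m n"
    and K: "K \<in> carrier_mat n n" "Ki \<in> carrier_mat n n" and Y: "Y \<in> carrier_mat n n"
  shows "(P * K * transpose_mat P) * transpose_mat (P * Y * Pi) * (transpose_mat Pi * Ki * Pi) =
    P * (K * transpose_mat Y * Ki) * Pi"
proof -
  have "transpose_mat P * transpose_mat Pi = 1\<^sub>m n"
    using P square_mat_transpose_mult[of Pi n P] by simp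
  then show ?thesis using P K Y by (simp add: square_mat_simps[where n=n])
qed

section \<open>Leonard pairs\<close>

lemma irreducible_tridiagonal_diagonal_symmetrizer:
  fixes T D :: "'a::field mat"
  assumes T: "T \<in> carrier_mat n n" "irreducible_tridiagonal T"
    and D: "D \<in> carrier_mat n n" "diagonal_mat D"
  obtains K Ki where "K \<in> carrier_mat n n" "Ki \<in> carrier_mat n n" "K * Ki = 1\<^sub>m n" "Ki * K = 1\<^sub>m n"
    and "transpose_mat K = K" "K * transpose_mat T * Ki = T" "K * transpose_mat D * Ki = D"
proof -
  define k where "k = tridiagonal_symmetrizer T"
  define K where "K = mat_diag n k"
  define Ki where "Ki = mat_diag n (\<lambda>i. inverse (k i))"
  have k_nonzero: "k i \<noteq> 0" if "i < n" for i
    using tridiagonal_symmetrizer_nonzero[OF T(2), of i] carrier_matD(1)[OF T(1)] that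
    by (simp add: k_def)
  have K: "K \<in> carrier_mat n n" "Ki \<in> carrier_mat n n" "K * Ki = 1\<^sub>m n" "Ki * K = 1\<^sub>m n"
    using k_nonzero by (auto simp: K_def Ki_def intro!: eq_matI) (auto simp: mat_diag_def)
  have "K * transpose_mat T * Ki = T"
    using irreducible_tridiagonal_symmetrizable[OF T] T K
    by (simp add: K_def k_def square_mat_simps[where n=n])
  moreover have "K * transpose_mat D * Ki = D"
  proof -
    define d where "d i = D $$ (i,i)" for i
    have "D = mat_diag n d"
      using D by (intro eq_matI) (auto simp: d_def mat_diag_def diagonal_mat_def)
    moreover have "K * transpose_mat (mat_diag n d) * Ki = mat_diag n d"
      using k_nonzero
      by (auto simp: K_def Ki_def transpose_mat_diag intro!: eq_matI) (auto simp: mat_diag_def)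
    ultimately show ?thesis by simp
  qed
  moreover have "transpose_mat K = K" by (simp add: K_def transpose_mat_diag)
  ultimately show ?thesis using K that by blast
qed

lemma leonard_pair_fixed_by_transpose_conj:
  fixes A As :: "'a::field mat"
  assumes "leonard_pair n A As"
  obtains M Mi where "M \<in> carrier_mat n n" "Mi \<in> carrier_mat n n" "M * Mi = 1\<^sub>m n" "Mi * M = 1\<^sub>m n"
    and "transpose_mat M = M" "M * transpose_mat A * Mi = A" "M * transpose_mat As * Mi = As"
proof -
  have A: "A \<in> carrier_mat n n" "As \<in> carrier_mat n n"
    using assms unfolding leonard_pair_def by auto
  obtain P Pi where P: "P \<in> carrier_mat n n" "Pi \<in> carrier_mat n n" "Pi * P = 1\<^sub>m n" "P * Pi = 1\<^sub>m n"
    and T: "irreducible_tridiagonal (Pi * A * P)" and D: "diagonal_mat (Pi * As * P)"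
    using assms unfolding leonard_pair_def by blast
  have TD: "Pi * A * P \<in> carrier_mat n n" "Pi * As * P \<in> carrier_mat n n"
    using A P by simp_all
  obtain K Ki where K: "K \<in> carrier_mat n n" "Ki \<in> carrier_mat n n" "K * Ki = 1\<^sub>m n" "Ki * K = 1\<^sub>m n"
    and K_sym: "transpose_mat K = K"
    and fixed: "K * transpose_mat (Pi * A * P) * Ki = Pi * A * P" "K * transpose_mat (Pi * As * P) * Ki = Pi * As * P"
    using irreducible_tridiagonal_diagonal_symmetrizer[OF TD(1) T TD(2) D] by blast
  have conj: "P * (Pi * X * P) * Pi = X" if "X \<in> carrier_mat n n" for X
    using P that by (simp add: square_mat_simps[where n=n])
  have "transpose_mat P * transpose_mat Pi = transpose_mat (Pi * P)"
    by (rule transpose_mult[symmetric]) (use P in auto)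
  moreover have "transpose_mat Pi * transpose_mat P = transpose_mat (P * Pi)"
    by (rule transpose_mult[symmetric]) (use P in auto)
  ultimately have PT: "transpose_mat P * transpose_mat Pi = 1\<^sub>m n" "transpose_mat Pi * transpose_mat P = 1\<^sub>m n"
    using P by simp_all
  show ?thesis
  proof
    show "P * K * transpose_mat P \<in> carrier_mat n n" "transpose_mat Pi * Ki * Pi \<in> carrier_mat n n"
      using P K by simp_all
    show "P * K * transpose_mat P * (transpose_mat Pi * Ki * Pi) = 1\<^sub>m n"
      "transpose_mat Pi * Ki * Pi * (P * K * transpose_mat P) = 1\<^sub>m n"
      using P K PT by (simp_all add: square_mat_simps[where n=n])
    show "transpose_mat (P * K * transpose_mat P) = P * K * transpose_mat P"
      using P K K_sym by (simp add: square_mat_simps[where n=n])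
    show "P * K * transpose_mat P * transpose_mat A * (transpose_mat Pi * Ki * Pi) = A"
      using transpose_conj_change_basis[OF P(1-3) K(1,2) TD(1)] fixed(1) conj[OF A(1)] by simp
    show "P * K * transpose_mat P * transpose_mat As * (transpose_mat Pi * Ki * Pi) = As"
      using transpose_conj_change_basis[OF P(1-3) K(1,2) TD(2)] fixed(2) conj[OF A(2)] by simp
  qed
qed

lemma leonard_pair_eigenvalues_distinct:
  fixes A As P Pi :: "'a::field mat"
  assumes LP: "leonard_pair n A As"
    and P: "P \<in> carrier_mat n n" "Pi \<in> carrier_mat n n" "Pi * P = 1\<^sub>m n" "P * Pi = 1\<^sub>m n"
    and D: "diagonal_mat (Pi * As * P)"
    and ij: "i < n" "j < n" "i \<noteq> j"
  shows "(Pi * As * P) $$ (i,i) \<noteq> (Pi * As * P) $$ (j,j)"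
proof -
  have As: "As \<in> carrier_mat n n" using LP unfolding leonard_pair_def by blast
  obtain Q Qi where Q: "Q \<in> carrier_mat n n" "Qi \<in> carrier_mat n n" "Qi * Q = 1\<^sub>m n" "Q * Qi = 1\<^sub>m n"
    and T: "irreducible_tridiagonal (Qi * As * Q)"
    using LP unfolding leonard_pair_def by blast
  have similar: "(Qi * As * Q) * (Qi * P) = (Qi * P) * (Pi * As * P)"
    using As P Q by (simp add: square_mat_simps[where n=n])
  have "(Pi * Q) * (Qi * P) = 1\<^sub>m n"
    using P Q by (simp add: square_mat_simps[where n=n])
  then show ?thesis
    using As P Q
    by (intro diagonal_entries_distinct_if_similar_irreducible_tridiagonal[OF _ T _ D _ _ _ similar ij]) simp_all
qed

lemma leonard_pair_generates:
  fixes A As :: "'a::field mat"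
  assumes LP: "leonard_pair n A As"
    and S: "subalgebra_mat n S" "A \<in> S" "As \<in> S"
  shows "S = carrier_mat n n"
proof -
  obtain P Pi where P: "P \<in> carrier_mat n n" "Pi \<in> carrier_mat n n" "Pi * P = 1\<^sub>m n" "P * Pi = 1\<^sub>m n"
    and T: "irreducible_tridiagonal (Pi * A * P)" and D: "diagonal_mat (Pi * As * P)"
    using LP unfolding leonard_pair_def by blast
  define S_conj where "S_conj = {Y \<in> carrier_mat n n. P * Y * Pi \<in> S}"
  have S_conj: "subalgebra_mat n S_conj"
    unfolding S_conj_def using subalgebra_mat_conj[OF S(1) P(1,2,4,3)] .
  have conj_mem: "Pi * X * P \<in> S_conj" if "X \<in> S" for X
  proof -
    have "X \<in> carrier_mat n n" using subalgebra_mat_carrier[OF S(1) that] .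
    then have "P * (Pi * X * P) * Pi = X"
      using P by (simp add: square_mat_simps[where n=n])
    then show ?thesis using P that \<open>X \<in> carrier_mat n n\<close> by (simp add: S_conj_def)
  qed
  have "matrix_unit n i j \<in> S_conj" if "i < n" "j < n" for i j
    using subalgebra_mat_matrix_units[OF S_conj conj_mem[OF S(2)] T conj_mem[OF S(3)] D
        leonard_pair_eigenvalues_distinct[OF LP P D] that] .
  then have "S_conj = carrier_mat n n"
    by (rule subalgebra_mat_eq_carrier_if_matrix_units[OF S_conj])
  show ?thesis
  proof
    show "carrier_mat n n \<subseteq> S"
    proof
      fix X :: "'a mat"
      assume X: "X \<in> carrier_mat n n"
      then have "Pi * X * P \<in> S_conj" using P \<open>S_conj = carrier_mat n n\<close> by simp
      moreover have "P * (Pi * X * P) * Pi = X"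
        using P X by (simp add: square_mat_simps[where n=n])
      ultimately show "X \<in> S" by (simp add: S_conj_def)
    qed
  qed (use subalgebra_mat_carrier[OF S(1)] in blast)
qed

lemma leonard_pair_antiautomorphism_unique:
  fixes A As :: "'a::field mat"
  assumes LP: "leonard_pair n A As"
    and \<sigma>: "antiautomorphism n \<sigma>" "\<sigma> A = A" "\<sigma> As = As"
    and \<tau>: "antiautomorphism n \<tau>" "\<tau> A = A" "\<tau> As = As"
    and X: "X \<in> carrier_mat n n"
  shows "\<tau> X = \<sigma> X"
proof -
  have "A \<in> carrier_mat n n" "As \<in> carrier_mat n n"
    using LP unfolding leonard_pair_def by blast+
  then have "{Y \<in> carrier_mat n n. \<tau> Y = \<sigma> Y} = carrier_mat n n"
    using leonard_pair_generates[OF LP antiautomorphism_equalizer_subalgebra[OF \<tau>(1) \<sigma>(1)]] \<sigma> \<tau>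
    by simp
  then show ?thesis using X by blast
qed

theorem theorem5p8:
  fixes d :: nat and A As :: "'a::field mat"
  assumes "leonard_pair (d + 1) A As"
  shows "\<exists>\<sigma>. antiautomorphism (d + 1) \<sigma> \<and> \<sigma> A = A \<and> \<sigma> As = As \<and>
           (\<forall>\<tau>. antiautomorphism (d + 1) \<tau> \<and> \<tau> A = A \<and> \<tau> As = As \<longrightarrow>
                 (\<forall>X\<in>carrier_mat (d + 1) (d + 1). \<tau> X = \<sigma> X)) \<and>
           (\<forall>X\<in>carrier_mat (d + 1) (d + 1). \<sigma> (\<sigma> X) = X)"
proof -
  obtain M Mi where M: "M \<in> carrier_mat (d + 1) (d + 1)" "Mi \<in> carrier_mat (d + 1) (d + 1)"
      "M * Mi = 1\<^sub>m (d + 1)" "Mi * M = 1\<^sub>m (d + 1)"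
    and sym: "transpose_mat M = M"
    and fixed: "M * transpose_mat A * Mi = A" "M * transpose_mat As * Mi = As"
    using leonard_pair_fixed_by_transpose_conj[OF assms] by blast
  define \<sigma> where "\<sigma> X = M * transpose_mat X * Mi" for X
  have anti: "antiautomorphism (d + 1) \<sigma>"
    unfolding \<sigma>_def[abs_def] by (rule transpose_conj_antiautomorphism[OF M])
  moreover have "\<sigma> A = A" "\<sigma> As = As" using fixed by (simp_all add: \<sigma>_def)
  moreover have "\<sigma> (\<sigma> X) = X" if "X \<in> carrier_mat (d + 1) (d + 1)" for X
    unfolding \<sigma>_def by (rule transpose_conj_involution[OF M sym that])
  ultimately show ?thesis
    using leonard_pair_antiautomorphism_unique[OF assms anti] by blast
qed

end
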